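(* Let $R$ be a local ring with maximal ideal $\mathcal{M}$ such that $\mathcal{M}^2=(0)$ and, as a left $R$-module, $\mathcal{M}=Ry_1\oplus\cdots\oplus Ry_t$ with $t\ge 2$, where each $Ry_i$ is a minimal left ideal of $R$. If there exist nonzero elements $x_1,x_2\in\mathcal{M}$ with $x_1R\cap x_2R=(0)$, then the left $R$-module $(R\oplus R)/R(x_1,x_2)$ is not a direct sum of cyclic modules.
   Context: All rings have identity and modules are unital. A ring $R$ is local if it has a unique maximal left ideal $\mathcal{M}$. Here $R(x_1,x_2)=\{(rx_1,rx_2): r\in R\}$ is the cyclic left submodule of $R\oplus R$ generated by $(x_1,x_2)$. *)

theory Defs
  imports Main
begin

definition left_ideal :: "'a::ring_1 set \<Rightarrow> bool" where
  "left_ideal I \<longleftrightarrow> 0 \<in> I \<and> (\<forall>a\<in>I. \<forall>b\<in>I. a + b \<in> I) \<and> (\<forall>r. \<forall>a\<in>I. r * a \<in> I)"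

definition maximal_left_ideal :: "'a::ring_1 set \<Rightarrow> bool" where
  "maximal_left_ideal M \<longleftrightarrow> left_ideal M \<and> M \<noteq> UNIV \<and>
     (\<forall>J. left_ideal J \<and> M \<subseteq> J \<and> J \<noteq> UNIV \<longrightarrow> J = M)"

definition local_ring :: "'a::ring_1 itself \<Rightarrow> bool" where
  "local_ring _ \<longleftrightarrow> (\<exists>!M::'a set. maximal_left_ideal M)"

definition minimal_left_ideal :: "'a::ring_1 set \<Rightarrow> bool" where
  "minimal_left_ideal I \<longleftrightarrow> left_ideal I \<and> I \<noteq> {0} \<and>
     (\<forall>J. left_ideal J \<and> J \<subseteq> I \<longrightarrow> J = {0} \<or> J = I)"

definition lcyc :: "'a::ring_1 \<Rightarrow> 'a set" where
  "lcyc y = {r * y | r. True}"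

definition rcyc :: "'a::ring_1 \<Rightarrow> 'a set" where
  "rcyc x = {x * r | r. True}"

definition internal_direct_sum_left :: "'a::ring_1 set \<Rightarrow> nat \<Rightarrow> (nat \<Rightarrow> 'a) \<Rightarrow> bool" where
  "internal_direct_sum_left M t y \<longleftrightarrow>
     M = {\<Sum>i<t. a i | a. \<forall>i<t. a i \<in> lcyc (y i)} \<and>
     (\<forall>a. (\<forall>i<t. a i \<in> lcyc (y i)) \<and> (\<Sum>i<t. a i) = 0 \<longrightarrow> (\<forall>i<t. a i = 0))"

definition smult2 :: "'a::ring_1 \<Rightarrow> 'a \<times> 'a \<Rightarrow> 'a \<times> 'a" where
  "smult2 r v = (r * fst v, r * snd v)"

definition add2 :: "'a::ring_1 \<times> 'a \<Rightarrow> 'a \<times> 'a \<Rightarrow> 'a \<times> 'a" where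
  "add2 v w = (fst v + fst w, snd v + snd w)"

definition diff2 :: "'a::ring_1 \<times> 'a \<Rightarrow> 'a \<times> 'a \<Rightarrow> 'a \<times> 'a" where
  "diff2 v w = (fst v - fst w, snd v - snd w)"

definition sum2 :: "('i \<Rightarrow> 'a::ring_1 \<times> 'a) \<Rightarrow> 'i set \<Rightarrow> 'a \<times> 'a" where
  "sum2 f F = ((\<Sum>i\<in>F. fst (f i)), (\<Sum>i\<in>F. snd (f i)))"

definition cyc2 :: "'a::ring_1 \<Rightarrow> 'a \<Rightarrow> ('a \<times> 'a) set" where
  "cyc2 x1 x2 = {smult2 r (x1, x2) | r. True}"

(* The quotient module (R (+) R)/N is the internal direct sum of the cyclic submodules
   R (g i + N), i \<in> I: every class is a finite sum of elements of the summands, and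
   a finite sum of elements of distinct summands vanishes only if every term does. *)
definition quotient_cyclic_decomposition ::
    "('a::ring_1 \<times> 'a) set \<Rightarrow> 'i set \<Rightarrow> ('i \<Rightarrow> 'a \<times> 'a) \<Rightarrow> bool" where
  "quotient_cyclic_decomposition N I g \<longleftrightarrow>
     (\<forall>v. \<exists>F r. F \<subseteq> I \<and> finite F \<and> diff2 v (sum2 (\<lambda>i. smult2 (r i) (g i)) F) \<in> N) \<and>
     (\<forall>F r. F \<subseteq> I \<and> finite F \<and> sum2 (\<lambda>i. smult2 (r i) (g i)) F \<in> N \<longrightarrow>
        (\<forall>i\<in>F. smult2 (r i) (g i) \<in> N))"

end

theory Submission
  imports Defs
begin

text \<open>Since \<open>\<M>\<^sup>2 = 0\<close>, every element outside \<open>\<M>\<close> is a unit. Suppose the quotient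
  \<open>(R \<oplus> R)/R(x\<^sub>1,x\<^sub>2)\<close> were a direct sum of cyclic modules \<open>R g\<^sub>i\<close>. Writing \<open>(1,0)\<close> in terms of
  the \<open>g\<^sub>i\<close>, some generator \<open>g\<^sub>i\<^sub>0 = (a,b)\<close> has a unit first coordinate, and disjointness of
  \<open>x\<^sub>1R\<close> and \<open>x\<^sub>2R\<close> forces \<open>R g\<^sub>i\<^sub>0\<close> to be free. If \<open>(1,0) \<equiv> \<Sum> r\<^sub>i g\<^sub>i\<close> and \<open>(0,1) \<equiv> \<Sum> s\<^sub>i g\<^sub>i\<close>,
  then \<open>(p,q) \<equiv> \<Sum> (p r\<^sub>i + q s\<^sub>i) g\<^sub>i\<close>; comparing the \<open>i\<^sub>0\<close>-components for \<open>(p,q) = (x\<^sub>1,x\<^sub>2) \<equiv> 0\<close>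
  and for \<open>(p,q) = g\<^sub>i\<^sub>0\<close> gives \<open>x\<^sub>1 u + x\<^sub>2 v = 0\<close> and \<open>a u + b v = 1\<close> with
  \<open>u = r\<^sub>i\<^sub>0\<close>, \<open>v = s\<^sub>i\<^sub>0\<close>. The second equation makes \<open>u\<close> or \<open>v\<close> a unit, and then the first puts
  \<open>x\<^sub>1\<close> into \<open>x\<^sub>2R\<close> or \<open>x\<^sub>2\<close> into \<open>x\<^sub>1R\<close>.\<close>

lemma maximal_left_ideal_one_notin:
  assumes "maximal_left_ideal (M :: 'a::ring_1 set)"
  shows "1 \<notin> M"
proof
  assume "1 \<in> M"
  then have "r \<in> M" for r
    using assms unfolding maximal_left_ideal_def left_ideal_def by (metis mult.right_neutral)
  then show False
    using assms unfolding maximal_left_ideal_def by auto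
qed

lemma left_ideal_sum:
  assumes "left_ideal (M :: 'a::ring_1 set)" and "\<And>i. i \<in> F \<Longrightarrow> f i \<in> M"
  shows "(\<Sum>i\<in>F. f i) \<in> M"
proof (cases "finite F")
  case True
  then show ?thesis
    using assms(2) by (induction F rule: finite_induct) (use assms(1) in \<open>auto simp: left_ideal_def\<close>)
next
  case False
  then show ?thesis
    using assms(1) by (simp add: left_ideal_def)
qed

lemma maximal_left_ideal_add_cyclic_eq_one:
  fixes M :: "'a::ring_1 set"
  assumes mx: "maximal_left_ideal M" and a: "a \<notin> M"
  obtains r m where "m \<in> M" and "r * a + m = 1"
proof -
  have li: "left_ideal M"
    using mx by (simp add: maximal_left_ideal_def)
  define J where "J = {r * a + m | r m. m \<in> M}"
  have "left_ideal J"
    unfolding left_ideal_def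
  proof (intro conjI ballI allI)
    show "0 \<in> J"
      using li unfolding J_def left_ideal_def by (auto intro!: exI[of _ 0])
  next
    fix x y assume "x \<in> J" "y \<in> J"
    then obtain r m r' m' where "x = r * a + m" "m \<in> M" "y = r' * a + m'" "m' \<in> M"
      unfolding J_def by auto
    then have "x + y = (r + r') * a + (m + m')" "m + m' \<in> M"
      using li unfolding left_ideal_def by (auto simp: algebra_simps)
    then show "x + y \<in> J"
      unfolding J_def by blast
  next
    fix q x assume "x \<in> J"
    then obtain r m where "x = r * a + m" "m \<in> M"
      unfolding J_def by auto
    then have "q * x = (q * r) * a + q * m" "q * m \<in> M"
      using li unfolding left_ideal_def by (auto simp: algebra_simps)
    then show "q * x \<in> J"
      unfolding J_def by blast
  qed
  moreover have "M \<subseteq> J"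
    unfolding J_def by (force intro: exI[of _ 0])
  moreover have "a \<in> J"
    using li unfolding J_def left_ideal_def by (force intro: exI[of _ 1])
  ultimately have "J = UNIV"
    using mx a unfolding maximal_left_ideal_def by blast
  then have "1 \<in> J"
    by simp
  then obtain r m where "m \<in> M" "1 = r * a + m"
    unfolding J_def by auto
  then show thesis
    using that by simp
qed

text \<open>With \<open>\<M>\<^sup>2 = 0\<close> the element \<open>1 + m\<close> inverts \<open>1 - m\<close> for \<open>m \<in> \<M>\<close>.\<close>

lemma left_invertible_notin_square_zero_maximal:
  fixes M :: "'a::ring_1 set"
  assumes mx: "maximal_left_ideal M" and sq: "\<forall>a\<in>M. \<forall>b\<in>M. a * b = 0" and a: "a \<notin> M"
  obtains s where "s * a = 1"
proof -
  obtain r m where m: "m \<in> M" and rm: "r * a + m = 1"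
    using maximal_left_ideal_add_cyclic_eq_one[OF mx a] .
  have "r * a = 1 - m"
    using rm by (simp add: eq_diff_eq)
  then have "((1 + m) * r) * a = (1 + m) * (1 - m)"
    by (simp add: mult.assoc)
  also have "\<dots> = 1"
    using sq m by (simp add: algebra_simps)
  finally show thesis
    using that by blast
qed

lemma invertible_notin_square_zero_maximal:
  fixes M :: "'a::ring_1 set"
  assumes mx: "maximal_left_ideal M" and sq: "\<forall>a\<in>M. \<forall>b\<in>M. a * b = 0" and a: "a \<notin> M"
  obtains s where "s * a = 1" and "a * s = 1"
proof -
  obtain s where s: "s * a = 1"
    using left_invertible_notin_square_zero_maximal[OF mx sq a] .
  show thesis
  proof (cases "s \<in> M")
    case False
    then obtain s' where "s' * s = 1"
      using left_invertible_notin_square_zero_maximal[OF mx sq] by blast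
    moreover have "s' = a"
      using s \<open>s' * s = 1\<close> by (metis mult.assoc mult_1_left mult_1_right)
    ultimately show thesis
      using that s by blast
  next
    case True
    text \<open>Then \<open>a s \<in> \<M>\<close> is an idempotent of square zero, so \<open>1 = s a = s (a s) a = 0\<close>.\<close>
    have "a * s \<in> M"
      using True mx by (simp add: maximal_left_ideal_def left_ideal_def)
    then have "(a * s) * (a * s) = 0"
      using sq by blast
    moreover have "(a * s) * (a * s) = a * s"
      using s by (metis mult.assoc mult_1_right)
    ultimately have "(1::'a) = 0"
      using s by (metis mult.assoc mult_1_left mult_zero_left mult_zero_right)
    then have "1 \<in> M"
      using mx by (simp add: maximal_left_ideal_def left_ideal_def)
    then show thesis
      using maximal_left_ideal_one_notin[OF mx] by blast
  qed
qed

lemma notin_rcyc_if_rcyc_disjoint: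
  assumes "rcyc x \<inter> rcyc y = {0}" and "x \<noteq> 0"
  shows "x \<notin> rcyc y"
proof -
  have "x \<in> rcyc x"
    unfolding rcyc_def by (metis (mono_tags) mem_Collect_eq mult_1_right)
  then show ?thesis
    using assms by blast
qed

lemma rcyc_mem_if_right_invertible_coefficient:
  fixes x y u v :: "'a::ring_1"
  assumes "x * u + y * v = 0" and "u * u' = 1"
  shows "x \<in> rcyc y"
proof -
  have "x = (x * u) * u'"
    using assms(2) by (simp add: mult.assoc)
  also have "\<dots> = y * (- (v * u'))"
  proof -
    have "x * u = - (y * v)"
      using assms(1) by (simp add: eq_neg_iff_add_eq_0)
    then show ?thesis
      by (simp add: mult.assoc)
  qed
  finally show ?thesis
    unfolding rcyc_def by blast
qed

lemma relation_coefficients_in_maximal: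
  fixes M :: "'a::ring_1 set"
  assumes mx: "maximal_left_ideal M" and sq: "\<forall>a\<in>M. \<forall>b\<in>M. a * b = 0"
    and x1: "x1 \<noteq> 0" and x2: "x2 \<noteq> 0" and dj: "rcyc x1 \<inter> rcyc x2 = {0}"
    and rel: "x1 * u + x2 * v = 0"
  shows "u \<in> M" and "v \<in> M"
proof -
  have "u \<in> M" if "rcyc x \<inter> rcyc y = {0}" "x \<noteq> 0" "x * u + y * v = 0" for x y u v
  proof (rule ccontr)
    assume "u \<notin> M"
    then obtain u' where "u * u' = 1"
      using invertible_notin_square_zero_maximal[OF mx sq] by blast
    then have "x \<in> rcyc y"
      using rcyc_mem_if_right_invertible_coefficient \<open>x * u + y * v = 0\<close> by blast
    then show False
      using notin_rcyc_if_rcyc_disjoint that(1,2) by blast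
  qed
  from this[OF dj x1 rel] this[of x2 x1 v u] show "u \<in> M" and "v \<in> M"
    using x2 dj rel by (simp_all add: Int_commute add.commute)
qed

lemma smult2_mem_cyc2_imp_zero:
  fixes M :: "'a::ring_1 set"
  assumes mx: "maximal_left_ideal M" and sq: "\<forall>a\<in>M. \<forall>b\<in>M. a * b = 0"
    and x1: "x1 \<in> M" and x2: "x2 \<notin> rcyc x1"
    and a: "a \<notin> M" and r: "smult2 r (a, b) \<in> cyc2 x1 x2"
  shows "r = 0"
proof -
  obtain c where c: "r * a = c * x1" "r * b = c * x2"
    using r by (auto simp: smult2_def cyc2_def)
  obtain a' where a': "a' * a = 1" "a * a' = 1"
    using invertible_notin_square_zero_maximal[OF mx sq a] .
  show ?thesis
  proof (cases "c \<in> M")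
    case True
    then have "r * a = 0"
      using c sq x1 by simp
    then show ?thesis
      by (metis a'(2) mult.assoc mult_1_right mult_zero_left)
  next
    case False
    then obtain c' where c': "c' * c = 1"
      using invertible_notin_square_zero_maximal[OF mx sq] by blast
    have x1_eq: "x1 = c' * r * a"
      using c c' by (metis mult.assoc mult_1_left)
    have "x2 = c' * r * b"
      using c c' by (metis mult.assoc mult_1_left)
    also have "\<dots> = c' * r * a * (a' * b)"
      using a' by (metis mult.assoc mult_1_left)
    also have "\<dots> = x1 * (a' * b)"
      using x1_eq by simp
    finally have "x2 \<in> rcyc x1"
      unfolding rcyc_def by blast
    then show ?thesis
      using x2 by blast
  qed
qed

definition submodule2 :: "('a::ring_1 \<times> 'a) set \<Rightarrow> bool" where
  "submodule2 N \<longleftrightarrow> (0, 0) \<in> N \<and> (\<forall>v\<in>N. \<forall>w\<in>N. add2 v w \<in> N) \<and> (\<forall>r. \<forall>v\<in>N. smult2 r v \<in> N)"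

lemma submodule2_cyc2: "submodule2 (cyc2 x1 x2)"
  unfolding submodule2_def cyc2_def
proof (intro conjI ballI allI)
  show "(0, 0) \<in> {smult2 r (x1, x2) | r. True}"
    by (auto simp: smult2_def intro!: exI[of _ 0])
next
  fix v w assume "v \<in> {smult2 r (x1, x2) | r. True}" "w \<in> {smult2 r (x1, x2) | r. True}"
  then obtain r s where "v = smult2 r (x1, x2)" "w = smult2 s (x1, x2)"
    by blast
  then have "add2 v w = smult2 (r + s) (x1, x2)"
    by (simp add: add2_def smult2_def algebra_simps)
  then show "add2 v w \<in> {smult2 r (x1, x2) | r. True}"
    by blast
next
  fix q v assume "v \<in> {smult2 r (x1, x2) | r. True}"
  then obtain r where "v = smult2 r (x1, x2)"
    by blast
  then have "smult2 q v = smult2 (q * r) (x1, x2)"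
    by (simp add: smult2_def mult.assoc)
  then show "smult2 q v \<in> {smult2 r (x1, x2) | r. True}"
    by blast
qed

lemma submodule2_diff2_trans:
  assumes "submodule2 N" and "diff2 u v \<in> N" and "diff2 v w \<in> N"
  shows "diff2 u w \<in> N"
proof -
  have "diff2 u w = add2 (diff2 u v) (diff2 v w)"
    by (simp add: diff2_def add2_def)
  then show ?thesis
    using assms unfolding submodule2_def by simp
qed

lemma sum2_smult2:
  "sum2 (\<lambda>i. smult2 (r i) (g i)) F = ((\<Sum>i\<in>F. r i * fst (g i)), (\<Sum>i\<in>F. r i * snd (g i)))"
  by (simp add: sum2_def smult2_def)

lemma sum2_smult2_extend_zero:
  fixes r :: "'i \<Rightarrow> 'a::ring_1"
  assumes "finite F" and "F' \<subseteq> F"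
  shows "sum2 (\<lambda>i. smult2 (if i \<in> F' then r i else 0) (g i)) F = sum2 (\<lambda>i. smult2 (r i) (g i)) F'"
proof -
  have "(\<Sum>i\<in>F. (if i \<in> F' then r i else 0) * h i) = (\<Sum>i\<in>F'. r i * h i)" for h :: "_ \<Rightarrow> 'a"
  proof -
    have "(\<Sum>i\<in>F. (if i \<in> F' then r i else 0) * h i) = (\<Sum>i\<in>F. if i \<in> F' then r i * h i else 0)"
      by (rule sum.cong) auto
    then show ?thesis
      using assms by (simp add: sum.inter_restrict[symmetric] Int_absorb1)
  qed
  then show ?thesis
    unfolding sum2_smult2 by simp
qed

lemma quotient_cyclic_decomposition_basis:
  assumes "quotient_cyclic_decomposition N I g"
  obtains F R S where "F \<subseteq> I" and "finite F"
    and "diff2 (1, 0) (sum2 (\<lambda>i. smult2 (R i) (g i)) F) \<in> N"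
    and "diff2 (0, 1) (sum2 (\<lambda>i. smult2 (S i) (g i)) F) \<in> N"
proof -
  obtain F1 r where F1: "F1 \<subseteq> I" "finite F1"
    and r: "diff2 (1, 0) (sum2 (\<lambda>i. smult2 (r i) (g i)) F1) \<in> N"
    using assms unfolding quotient_cyclic_decomposition_def by blast
  obtain F2 s where F2: "F2 \<subseteq> I" "finite F2"
    and s: "diff2 (0, 1) (sum2 (\<lambda>i. smult2 (s i) (g i)) F2) \<in> N"
    using assms unfolding quotient_cyclic_decomposition_def by blast
  have "sum2 (\<lambda>i. smult2 (if i \<in> F1 then r i else 0) (g i)) (F1 \<union> F2)
      = sum2 (\<lambda>i. smult2 (r i) (g i)) F1"
    "sum2 (\<lambda>i. smult2 (if i \<in> F2 then s i else 0) (g i)) (F1 \<union> F2)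
      = sum2 (\<lambda>i. smult2 (s i) (g i)) F2"
    using F1 F2 by (simp_all add: sum2_smult2_extend_zero)
  then show thesis
    using that[of "F1 \<union> F2" "\<lambda>i. if i \<in> F1 then r i else 0" "\<lambda>i. if i \<in> F2 then s i else 0"]
      F1 F2 r s by simp
qed

lemma basis_combination_diff2_mem:
  assumes N: "submodule2 N"
    and R: "diff2 (1, 0) (sum2 (\<lambda>i. smult2 (R i) (g i)) F) \<in> N"
    and S: "diff2 (0, 1) (sum2 (\<lambda>i. smult2 (S i) (g i)) F) \<in> N"
  shows "diff2 (p, q) (sum2 (\<lambda>i. smult2 (p * R i + q * S i) (g i)) F) \<in> N"
proof -
  have "diff2 (p, q) (sum2 (\<lambda>i. smult2 (p * R i + q * S i) (g i)) F)
      = add2 (smult2 p (diff2 (1, 0) (sum2 (\<lambda>i. smult2 (R i) (g i)) F)))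
             (smult2 q (diff2 (0, 1) (sum2 (\<lambda>i. smult2 (S i) (g i)) F)))"
    by (simp add: sum2_def diff2_def add2_def smult2_def sum_distrib_left sum.distrib
        algebra_simps)
  then show ?thesis
    using N R S unfolding submodule2_def by simp
qed

lemma quotient_cyclic_decomposition_component:
  assumes Q: "quotient_cyclic_decomposition N I g" and N: "submodule2 N"
    and F: "F \<subseteq> I" "finite F" "i0 \<in> F"
    and \<rho>: "diff2 (smult2 c (g i0)) (sum2 (\<lambda>i. smult2 (\<rho> i) (g i)) F) \<in> N"
  shows "smult2 (\<rho> i0 - c) (g i0) \<in> N"
proof -
  define \<rho>' where "\<rho>' i = \<rho> i - (if i = i0 then c else 0)" for i
  have "(\<Sum>i\<in>F. \<rho>' i * h i) = (\<Sum>i\<in>F. \<rho> i * h i) - c * h i0" for h :: "_ \<Rightarrow> 'a"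
  proof -
    have "\<rho>' i * h i = \<rho> i * h i - (if i = i0 then c * h i0 else 0)" for i
      by (simp add: \<rho>'_def left_diff_distrib)
    then show ?thesis
      using F(2,3) by (simp add: sum_subtractf)
  qed
  then have "sum2 (\<lambda>i. smult2 (\<rho>' i) (g i)) F
      = smult2 (-1) (diff2 (smult2 c (g i0)) (sum2 (\<lambda>i. smult2 (\<rho> i) (g i)) F))"
    unfolding sum2_smult2 by (simp add: diff2_def smult2_def)
  then have "sum2 (\<lambda>i. smult2 (\<rho>' i) (g i)) F \<in> N"
    using N \<rho> unfolding submodule2_def by simp
  then have "smult2 (\<rho>' i0) (g i0) \<in> N"
    using Q F unfolding quotient_cyclic_decomposition_def by blast
  then show ?thesis
    by (simp add: \<rho>'_def)
qed

lemma quotient_cyclic_decomposition_basis_coefficient: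
  assumes Q: "quotient_cyclic_decomposition N I g" and N: "submodule2 N"
    and F: "F \<subseteq> I" "finite F" "i0 \<in> F"
    and R: "diff2 (1, 0) (sum2 (\<lambda>i. smult2 (R i) (g i)) F) \<in> N"
    and S: "diff2 (0, 1) (sum2 (\<lambda>i. smult2 (S i) (g i)) F) \<in> N"
    and pq: "diff2 (smult2 c (g i0)) (p, q) \<in> N"
  shows "smult2 (p * R i0 + q * S i0 - c) (g i0) \<in> N"
proof -
  have "diff2 (smult2 c (g i0)) (sum2 (\<lambda>i. smult2 (p * R i + q * S i) (g i)) F) \<in> N"
    using submodule2_diff2_trans[OF N pq basis_combination_diff2_mem[OF N R S]] .
  then show ?thesis
    by (rule quotient_cyclic_decomposition_component[OF Q N F])
qed

lemma exists_generator_fst_notin: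
  fixes M :: "'a::ring_1 set"
  assumes mx: "maximal_left_ideal M" and x1: "x1 \<in> M"
    and R: "diff2 (1, 0) (sum2 (\<lambda>i. smult2 (R i) (g i)) F) \<in> cyc2 x1 x2"
  shows "\<exists>i\<in>F. fst (g i) \<notin> M"
proof (rule ccontr)
  assume "\<not> (\<exists>i\<in>F. fst (g i) \<notin> M)"
  have li: "left_ideal M"
    using mx by (simp add: maximal_left_ideal_def)
  obtain c where c: "1 - (\<Sum>i\<in>F. R i * fst (g i)) = c * x1"
    using R unfolding sum2_smult2 by (auto simp: diff2_def smult2_def cyc2_def)
  have "(\<Sum>i\<in>F. R i * fst (g i)) \<in> M"
    using li \<open>\<not> (\<exists>i\<in>F. fst (g i) \<notin> M)\<close>
    by (intro left_ideal_sum) (auto simp: left_ideal_def)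
  moreover have "c * x1 \<in> M"
    using li x1 by (simp add: left_ideal_def)
  ultimately have "(\<Sum>i\<in>F. R i * fst (g i)) + c * x1 \<in> M"
    using li by (simp add: left_ideal_def)
  then show False
    using c maximal_left_ideal_one_notin[OF mx] by (simp add: algebra_simps)
qed

theorem lemma2p1:
  fixes M :: "'a::ring_1 set" and t :: nat and y :: "nat \<Rightarrow> 'a" and x1 x2 :: 'a
    and I :: "'i set" and g :: "'i \<Rightarrow> 'a \<times> 'a"
  assumes "local_ring TYPE('a)"
    and mx: "maximal_left_ideal M"
    and sq: "\<forall>a\<in>M. \<forall>b\<in>M. a * b = 0"
    and "t \<ge> 2"
    and "\<forall>i<t. minimal_left_ideal (lcyc (y i))"
    and "internal_direct_sum_left M t y"
    and x1M: "x1 \<in> M" and "x2 \<in> M" and x1: "x1 \<noteq> 0" and x2: "x2 \<noteq> 0"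
    and dj: "rcyc x1 \<inter> rcyc x2 = {0}"
  shows "\<not> quotient_cyclic_decomposition (cyc2 x1 x2) I g"
proof
  assume Q: "quotient_cyclic_decomposition (cyc2 x1 x2) I g"
  note N = submodule2_cyc2[of x1 x2]
  obtain F R S where F: "F \<subseteq> I" "finite F"
    and R: "diff2 (1, 0) (sum2 (\<lambda>i. smult2 (R i) (g i)) F) \<in> cyc2 x1 x2"
    and S: "diff2 (0, 1) (sum2 (\<lambda>i. smult2 (S i) (g i)) F) \<in> cyc2 x1 x2"
    using quotient_cyclic_decomposition_basis[OF Q] .
  obtain i0 where i0: "i0 \<in> F" "fst (g i0) \<notin> M"
    using exists_generator_fst_notin[OF mx x1M R] by blast
  obtain a b where ab: "g i0 = (a, b)"
    by fastforce
  have "x2 \<notin> rcyc x1"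
    using notin_rcyc_if_rcyc_disjoint[of x2 x1] dj x2 by (simp add: Int_commute)
  moreover have "a \<notin> M"
    using i0(2) ab by simp
  ultimately have free: "r = 0" if "smult2 r (a, b) \<in> cyc2 x1 x2" for r
    using smult2_mem_cyc2_imp_zero[OF mx sq x1M _ _ that] by blast
  have "diff2 (smult2 0 (g i0)) (x1, x2) = smult2 (-1) (x1, x2)"
    by (simp add: diff2_def smult2_def)
  then have "diff2 (smult2 0 (g i0)) (x1, x2) \<in> cyc2 x1 x2"
    unfolding cyc2_def by blast
  then have "smult2 (x1 * R i0 + x2 * S i0 - 0) (g i0) \<in> cyc2 x1 x2"
    by (rule quotient_cyclic_decomposition_basis_coefficient[OF Q N F i0(1) R S])
  then have "x1 * R i0 + x2 * S i0 = 0"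
    using ab free by simp
  then have "R i0 \<in> M" "S i0 \<in> M"
    using relation_coefficients_in_maximal[OF mx sq x1 x2 dj] by blast+
  then have "a * R i0 + b * S i0 \<in> M"
    using mx by (simp add: maximal_left_ideal_def left_ideal_def)
  moreover have "diff2 (smult2 1 (g i0)) (a, b) \<in> cyc2 x1 x2"
    using N ab by (simp add: submodule2_def diff2_def smult2_def)
  then have "smult2 (a * R i0 + b * S i0 - 1) (g i0) \<in> cyc2 x1 x2"
    by (rule quotient_cyclic_decomposition_basis_coefficient[OF Q N F i0(1) R S])
  then have "a * R i0 + b * S i0 = 1"
    using ab free by fastforce
  ultimately show False
    using maximal_left_ideal_one_notin[OF mx] by simp
qed

end
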